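(* Let $\Sigma$ be a finite connected multigraph (loops allowed) and $\varphi,\vartheta\colon V(\Sigma)\to\mathbb{R}_{\ge0}$ functions such that $\Delta(\varphi)-\Delta(\vartheta)=F-G$, where $F$ and $G$ are effective divisors on $\Sigma$ of degree at most $d$. Suppose there are (not necessarily distinct) vertices $v,w$ with $\varphi(v)=\vartheta(w)=0$. Then \[\max_{u\in V(\Sigma)}|\varphi(u)-\vartheta(u)|\le d\cdot\operatorname{diam}(\Sigma).\]
   Context: A divisor on $\Sigma$ is a formal sum $\sum_v a_v(v)$ with $a_v\in\mathbb{R}$; it is effective if all $a_v\ge0$, and its degree is $\sum_v a_v$. For $\varphi\colon V(\Sigma)\to\mathbb{R}$, the Laplacian is the divisor $\Delta(\varphi)(v)=\sum_{e=vw}(\varphi(v)-\varphi(w))$, the sum over edges $e$ incident to $v$ with other endpoint $w$ (loops contribute $0$). $\operatorname{diam}(\Sigma)$ is the maximum over pairs of vertices of the number of edges in a shortest path joining them. *)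

theory Defs
  imports Complex_Main
begin

text \<open>A finite multigraph (loops allowed) is given by a finite vertex set V, a finite set
of edge identifiers E, and two endpoint maps src, tgt (the orientation is irrelevant:
an edge e joins src e and tgt e; a loop has src e = tgt e).\<close>

definition multigraph :: "'v set \<Rightarrow> 'e set \<Rightarrow> ('e \<Rightarrow> 'v) \<Rightarrow> ('e \<Rightarrow> 'v) \<Rightarrow> bool" where
  "multigraph V E src tgt \<longleftrightarrow> finite V \<and> finite E \<and> (\<forall>e\<in>E. src e \<in> V \<and> tgt e \<in> V)"

definition adjacent :: "'e set \<Rightarrow> ('e \<Rightarrow> 'v) \<Rightarrow> ('e \<Rightarrow> 'v) \<Rightarrow> 'v \<Rightarrow> 'v \<Rightarrow> bool" where
  "adjacent E src tgt u w \<longleftrightarrow>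
     (\<exists>e\<in>E. (src e = u \<and> tgt e = w) \<or> (src e = w \<and> tgt e = u))"

definition walk_of_length ::
  "'v set \<Rightarrow> 'e set \<Rightarrow> ('e \<Rightarrow> 'v) \<Rightarrow> ('e \<Rightarrow> 'v) \<Rightarrow> 'v \<Rightarrow> 'v \<Rightarrow> nat \<Rightarrow> bool" where
  "walk_of_length V E src tgt u w n \<longleftrightarrow>
     (\<exists>xs. length xs = Suc n \<and> hd xs = u \<and> last xs = w \<and> set xs \<subseteq> V \<and>
           (\<forall>i<n. adjacent E src tgt (xs ! i) (xs ! Suc i)))"

definition connected_graph :: "'v set \<Rightarrow> 'e set \<Rightarrow> ('e \<Rightarrow> 'v) \<Rightarrow> ('e \<Rightarrow> 'v) \<Rightarrow> bool" where
  "connected_graph V E src tgt \<longleftrightarrow> (\<forall>u\<in>V. \<forall>w\<in>V. \<exists>n. walk_of_length V E src tgt u w n)"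

definition graph_dist :: "'v set \<Rightarrow> 'e set \<Rightarrow> ('e \<Rightarrow> 'v) \<Rightarrow> ('e \<Rightarrow> 'v) \<Rightarrow> 'v \<Rightarrow> 'v \<Rightarrow> nat" where
  "graph_dist V E src tgt u w = (LEAST n. walk_of_length V E src tgt u w n)"

definition diam :: "'v set \<Rightarrow> 'e set \<Rightarrow> ('e \<Rightarrow> 'v) \<Rightarrow> ('e \<Rightarrow> 'v) \<Rightarrow> nat" where
  "diam V E src tgt = Max {graph_dist V E src tgt u w | u w. u \<in> V \<and> w \<in> V}"

text \<open>Laplacian: sum over edges incident to v of (phi v - phi(other endpoint)).
Each edge incident to v is counted via the endpoint equal to v; loops contribute 0.\<close>
definition laplacian :: "'e set \<Rightarrow> ('e \<Rightarrow> 'v) \<Rightarrow> ('e \<Rightarrow> 'v) \<Rightarrow> ('v \<Rightarrow> real) \<Rightarrow> 'v \<Rightarrow> real" where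
  "laplacian E src tgt \<phi> v =
     (\<Sum>e\<in>{e\<in>E. src e = v}. \<phi> v - \<phi> (tgt e)) + (\<Sum>e\<in>{e\<in>E. tgt e = v}. \<phi> v - \<phi> (src e))"

definition effective :: "'v set \<Rightarrow> ('v \<Rightarrow> real) \<Rightarrow> bool" where
  "effective V D \<longleftrightarrow> (\<forall>v\<in>V. D v \<ge> 0)"

definition degree :: "'v set \<Rightarrow> ('v \<Rightarrow> real) \<Rightarrow> real" where
  "degree V D = (\<Sum>v\<in>V. D v)"

end

theory Submission
  imports Defs
begin

text \<open>Put \<open>h = \<phi> - \<theta>\<close>, so \<open>\<Delta>(h) = F - G \<le> F\<close>. If \<open>h\<close> drops across an edge \<open>ab\<close>, sum
  \<open>\<Delta>(h)\<close> over the superlevel set \<open>S = {h \<ge> h a}\<close>: the sum is the total drop of \<open>h\<close> along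
  edges leaving \<open>S\<close>, hence at least \<open>h a - h b\<close>, and at most \<open>deg F \<le> d\<close>. So \<open>h\<close> is
  \<open>d\<close>-Lipschitz for the graph metric and varies by at most \<open>d \<cdot> diam\<close>. Finally \<open>h v \<le> 0 \<le> h w\<close>
  by the vanishing and nonnegativity hypotheses, so \<open>|h u|\<close> is bounded by the variation of \<open>h\<close>.\<close>

lemma laplacian_diff:
  "laplacian E src tgt (\<lambda>x. f x - g x) v = laplacian E src tgt f v - laplacian E src tgt g v"
proof -
  have "\<And>y. (f v - g v) - (f y - g y) = (f v - f y) - (g v - g y)" by simp
  then show ?thesis unfolding laplacian_def sum_subtractf by simp
qed

lemma sum_laplacian:
  assumes "finite E" "finite S"
  shows "(\<Sum>x\<in>S. laplacian E src tgt h x) =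
    (\<Sum>e\<in>E. (if src e \<in> S then h (src e) - h (tgt e) else 0)
          + (if tgt e \<in> S then h (tgt e) - h (src e) else 0))"
proof -
  have src_part: "(\<Sum>e\<in>{e\<in>E. src e = x}. h x - h (tgt e))
      = (\<Sum>e\<in>E. if src e = x then h (src e) - h (tgt e) else 0)" for x
    using assms by (auto simp add: sum.inter_filter[symmetric] intro!: sum.cong)
  have tgt_part: "(\<Sum>e\<in>{e\<in>E. tgt e = x}. h x - h (src e))
      = (\<Sum>e\<in>E. if tgt e = x then h (tgt e) - h (src e) else 0)" for x
    using assms by (auto simp add: sum.inter_filter[symmetric] intro!: sum.cong)
  have "(\<Sum>x\<in>S. laplacian E src tgt h x) = (\<Sum>x\<in>S. \<Sum>e\<in>E.
      (if src e = x then h (src e) - h (tgt e) else 0) + (if tgt e = x then h (tgt e) - h (src e) else 0))"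
    unfolding laplacian_def src_part tgt_part by (simp add: sum.distrib)
  also have "\<dots> = (\<Sum>e\<in>E. \<Sum>x\<in>S.
      (if src e = x then h (src e) - h (tgt e) else 0) + (if tgt e = x then h (tgt e) - h (src e) else 0))"
    by (rule sum.swap)
  also have "\<dots> = (\<Sum>e\<in>E. (if src e \<in> S then h (src e) - h (tgt e) else 0)
                        + (if tgt e \<in> S then h (tgt e) - h (src e) else 0))"
    using assms(2) by (simp add: sum.distrib sum.delta)
  finally show ?thesis .
qed

lemma degree_nonneg:
  assumes "effective V F" shows "0 \<le> degree V F"
  using assms unfolding effective_def degree_def by (simp add: sum_nonneg)

lemma adjacent_diff_le_degree:
  assumes mg: "multigraph V E src tgt"
    and lap: "\<forall>x\<in>V. laplacian E src tgt h x \<le> F x" and effF: "effective V F"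
    and adj: "adjacent E src tgt a b"
  shows "h a - h b \<le> degree V F"
proof (cases "h a \<le> h b")
  case True
  then show ?thesis using degree_nonneg[OF effF] by linarith
next
  case False
  have fE: "finite E" and fV: "finite V" and ends: "\<forall>e\<in>E. src e \<in> V \<and> tgt e \<in> V"
    using mg unfolding multigraph_def by auto
  define S where "S = {x\<in>V. h x \<ge> h a}"
  define drop where "drop e = (if src e \<in> S then h (src e) - h (tgt e) else 0)
                             + (if tgt e \<in> S then h (tgt e) - h (src e) else 0)" for e
  have drop_nonneg: "drop e \<ge> 0" if "e \<in> E" for e
    using ends that unfolding drop_def S_def by auto
  obtain e0 where e0: "e0 \<in> E" "(src e0 = a \<and> tgt e0 = b) \<or> (src e0 = b \<and> tgt e0 = a)"
    using adj unfolding adjacent_def by auto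
  have "h a - h b = drop e0" using e0 False ends unfolding drop_def S_def by auto
  also have "\<dots> \<le> (\<Sum>e\<in>E. drop e)"
    by (rule member_le_sum) (use drop_nonneg e0 fE in auto)
  also have "\<dots> = (\<Sum>x\<in>S. laplacian E src tgt h x)"
    using sum_laplacian[OF fE, of S src tgt h] fV unfolding drop_def S_def by simp
  also have "\<dots> \<le> (\<Sum>x\<in>S. F x)" using lap S_def by (auto intro: sum_mono)
  also have "\<dots> \<le> (\<Sum>x\<in>V. F x)" using effF fV S_def unfolding effective_def
    by (intro sum_mono2) auto
  finally show ?thesis unfolding degree_def .
qed

lemma walk_diff_le:
  assumes lipschitz: "\<And>x y. x \<in> V \<Longrightarrow> y \<in> V \<Longrightarrow> adjacent E src tgt x y \<Longrightarrow> \<bar>h y - h x\<bar> \<le> c"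
    and walk: "walk_of_length V E src tgt a b n"
  shows "\<bar>h b - h a\<bar> \<le> c * real n"
proof -
  obtain xs where xs: "length xs = Suc n" "hd xs = a" "last xs = b" "set xs \<subseteq> V"
    "\<forall>i<n. adjacent E src tgt (xs ! i) (xs ! Suc i)"
    using walk unfolding walk_of_length_def by blast
  have prefix: "\<bar>h (xs ! i) - h (xs ! 0)\<bar> \<le> c * real i" if "i \<le> n" for i
    using that
  proof (induction i)
    case 0 then show ?case by simp
  next
    case (Suc i)
    have "xs ! i \<in> V" "xs ! Suc i \<in> V" using xs(1,4) Suc.prems by (auto simp: subset_iff)
    then have "\<bar>h (xs ! Suc i) - h (xs ! i)\<bar> \<le> c" using lipschitz xs(5) Suc.prems by simp
    with Suc show ?case by (simp add: algebra_simps)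
  qed
  have "xs ! 0 = a" using xs(1,2) by (metis hd_conv_nth list.size(3) nat.distinct(1))
  moreover have "xs ! n = b" using xs(1,3) by (metis diff_Suc_1 last_conv_nth list.size(3) nat.distinct(1))
  ultimately show ?thesis using prefix[of n] by simp
qed

lemma walk_of_length_graph_dist:
  assumes "connected_graph V E src tgt" "a \<in> V" "b \<in> V"
  shows "walk_of_length V E src tgt a b (graph_dist V E src tgt a b)"
proof -
  have "\<exists>n. walk_of_length V E src tgt a b n" using assms unfolding connected_graph_def by auto
  then show ?thesis unfolding graph_dist_def by (rule LeastI_ex)
qed

lemma graph_dist_le_diam:
  assumes "finite V" "a \<in> V" "b \<in> V"
  shows "graph_dist V E src tgt a b \<le> diam V E src tgt"
proof -
  have "{graph_dist V E src tgt u w | u w. u \<in> V \<and> w \<in> V}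
      = (\<lambda>(u, w). graph_dist V E src tgt u w) ` (V \<times> V)"
    by auto
  then show ?thesis unfolding diam_def using assms by (intro Max_ge) auto
qed

lemma diff_le_diam:
  assumes "multigraph V E src tgt" "connected_graph V E src tgt" "0 \<le> c"
    and "\<And>x y. x \<in> V \<Longrightarrow> y \<in> V \<Longrightarrow> adjacent E src tgt x y \<Longrightarrow> \<bar>h y - h x\<bar> \<le> c"
    and "a \<in> V" "b \<in> V"
  shows "\<bar>h b - h a\<bar> \<le> c * real (diam V E src tgt)"
proof -
  have "finite V" using assms(1) unfolding multigraph_def by simp
  have "\<bar>h b - h a\<bar> \<le> c * real (graph_dist V E src tgt a b)"
    by (rule walk_diff_le[where h = h, OF assms(4) walk_of_length_graph_dist[OF assms(2,5,6)]])
  also have "\<dots> \<le> c * real (diam V E src tgt)"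
    using graph_dist_le_diam[OF \<open>finite V\<close> assms(5,6), of E src tgt] \<open>0 \<le> c\<close> by (simp add: mult_left_mono)
  finally show ?thesis .
qed

theorem mainTheorem8:
  fixes V :: "'v set" and E :: "'e set" and src tgt :: "'e \<Rightarrow> 'v"
    and \<phi> \<theta> F G :: "'v \<Rightarrow> real" and d :: real and v w :: 'v
  assumes "multigraph V E src tgt"
    and "connected_graph V E src tgt"
    and "\<forall>u\<in>V. \<phi> u \<ge> 0" and "\<forall>u\<in>V. \<theta> u \<ge> 0"
    and "effective V F" and "effective V G"
    and "degree V F \<le> d" and "degree V G \<le> d"
    and "\<forall>u\<in>V. laplacian E src tgt \<phi> u - laplacian E src tgt \<theta> u = F u - G u"
    and "v \<in> V" and "w \<in> V" and "\<phi> v = 0" and "\<theta> w = 0"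
  shows "Max ((\<lambda>u. \<bar>\<phi> u - \<theta> u\<bar>) ` V) \<le> d * real (diam V E src tgt)"
proof -
  define h where "h x = \<phi> x - \<theta> x" for x
  have laplacian_le: "\<forall>x\<in>V. laplacian E src tgt h x \<le> F x"
    using assms(6,9) unfolding h_def laplacian_diff effective_def by force
  have "\<bar>h y - h x\<bar> \<le> d" if "adjacent E src tgt x y" for x y
  proof -
    have "adjacent E src tgt y x" using that unfolding adjacent_def by blast
    then show ?thesis
      using adjacent_diff_le_degree[OF assms(1) laplacian_le assms(5)] that assms(7)
      by (metis abs_le_iff minus_diff_eq order_trans)
  qed
  then have variation: "\<bar>h b - h a\<bar> \<le> d * real (diam V E src tgt)" if "a \<in> V" "b \<in> V" for a b
    using diff_le_diam[OF assms(1,2)] degree_nonneg[OF assms(5)] assms(7) that by force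
  have "h v \<le> 0" "h w \<ge> 0" using assms(3,4,10-13) unfolding h_def by auto
  then have "\<bar>h u\<bar> \<le> d * real (diam V E src tgt)" if "u \<in> V" for u
    using variation[OF assms(10) that] variation[OF assms(11) that] by linarith
  moreover have "finite V" using assms(1) unfolding multigraph_def by simp
  ultimately show ?thesis using assms(10) unfolding h_def by (subst Max_le_iff) auto
qed

end
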